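(* Let $k\ge2$, let $\theta_1,\dots,\theta_k\in[-\frac{\pi}{2},\frac{\pi}{2}]$ be pairwise distinct, $\theta_{\min}=\min_{p\ne j}|\theta_p-\theta_j|$, and $a=(a_1,\dots,a_k)^T$ with $|a_j|\ge m_{\min}>0$. Let $\hat\theta_1,\dots,\hat\theta_k\in[-\frac{\pi}{2},\frac{\pi}{2}]$ be pairwise distinct and $\hat a=(\hat a_1,\dots,\hat a_k)^T\in\mathbb C^k$ such that $\|\hat A\hat a-Aa\|_2<\sigma$, where $\hat A=(\phi_{2k-1}(e^{i\hat\theta_1}),\dots,\phi_{2k-1}(e^{i\hat\theta_k}))$ and $A=(\phi_{2k-1}(e^{i\theta_1}),\dots,\phi_{2k-1}(e^{i\theta_k}))$. Then $$\|\eta_{k,k}(e^{i\theta_1},\dots,e^{i\theta_k},e^{i\hat\theta_1},\dots,e^{i\hat\theta_k})\|_\infty<\frac{2^k\pi^{k-1}}{\zeta(k)\,\theta_{\min}^{k-1}}\,\frac{\sigma}{m_{\min}}.$$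
   Context: $\phi_s(z)=(1,z,\dots,z^s)^T$. For $z_1,\dots,z_p,\hat z_1,\dots,\hat z_q\in\mathbb C$, $\eta_{p,q}(z_1,\dots,z_p,\hat z_1,\dots,\hat z_q)\in\mathbb R^p$ is the vector whose $j$-th entry is $\prod_{l=1}^q|z_j-\hat z_l|$. For an integer $k\ge1$: $\zeta(k)=\big((\tfrac{k-1}{2})!\big)^2$ if $k$ is odd, $\zeta(k)=(\tfrac{k}{2})!(\tfrac{k-2}{2})!$ if $k$ is even. *)

theory Defs
  imports "HOL-Analysis.Analysis"
begin

text \<open>Vectors are indexed 0..n-1 (functions nat => complex).\<close>

text \<open>phi_s(z) = (1,z,...,z^s)^T, entry t (t = 0..s).\<close>
definition phi :: "nat \<Rightarrow> complex \<Rightarrow> nat \<Rightarrow> complex" where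
  "phi s z t = z ^ t"

text \<open>Matrix-vector product with columns phi_s(z_j), j<k: entry t of (phi_s(z_0),...,phi_s(z_{k-1})) c.\<close>
definition vandermonde_apply :: "nat \<Rightarrow> nat \<Rightarrow> (nat \<Rightarrow> complex) \<Rightarrow> (nat \<Rightarrow> complex) \<Rightarrow> nat \<Rightarrow> complex" where
  "vandermonde_apply s k z c t = (\<Sum>j<k. phi s (z j) t * c j)"

definition norm2 :: "nat \<Rightarrow> (nat \<Rightarrow> complex) \<Rightarrow> real" where
  "norm2 n v = sqrt (\<Sum>t<n. (cmod (v t))\<^sup>2)"

definition eta :: "nat \<Rightarrow> nat \<Rightarrow> (nat \<Rightarrow> complex) \<Rightarrow> (nat \<Rightarrow> complex) \<Rightarrow> nat \<Rightarrow> real" where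
  "eta p q z zh j = (\<Prod>l<q. cmod (z j - zh l))"

definition norm_inf :: "nat \<Rightarrow> (nat \<Rightarrow> real) \<Rightarrow> real" where
  "norm_inf n v = Max ((\<lambda>j. \<bar>v j\<bar>) ` {..<n})"

definition zeta :: "nat \<Rightarrow> real" where
  "zeta k = (if odd k then (fact ((k - 1) div 2))\<^sup>2
             else fact (k div 2) * fact ((k - 2) div 2))"

end

theory Submission
  imports Defs "HOL-Computational_Algebra.Polynomial"
begin

text \<open>Fix j and let P be the monic polynomial of degree 2k - 1 whose roots are all the
  estimated nodes e^{i\<theta>h_l} and all true nodes e^{i\<theta>_p} with p \<noteq> j. Pairing the coefficient
  vector of P with the residual gives exactly -a_j P(e^{i\<theta>_j}); since all roots lie
  on the unit circle the coefficients have l1-norm at most 2^{2k-1}, so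
  |a_j| |P(e^{i\<theta>_j})| \<le> 2^{2k-1} \<sigma>. Finally |P(e^{i\<theta>_j})| is the j-th entry of \<eta> times
  \<Prod>_{p\<noteq>j} |e^{i\<theta>_j} - e^{i\<theta>_p}|, and by Jordan's inequality and the separation \<theta>_min this
  product is at least (2/\<pi>)^{k-1} \<theta>_min^{k-1} a! b!, where a and b count the nodes below and
  above \<theta>_j; a! b! \<ge> \<zeta>(k) as a + b = k - 1.\<close>

lemma sin_ge_linear:
  fixes x :: real
  assumes "0 \<le> x" "x \<le> pi / 2"
  shows "2 / pi * x \<le> sin x"
proof -
  have "convex_on {0..pi/2} (\<lambda>x. - sin x)"
  proof (rule convex_on_realI[where f' = "\<lambda>x. - cos x"])
    show "((\<lambda>x. - sin x) has_real_derivative - cos x) (at x)" for x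
      by (auto intro!: derivative_eq_intros)
    show "- cos x \<le> - cos y" if "x \<in> {0..pi/2}" "y \<in> {0..pi/2}" "x \<le> y" for x y
      using that by (auto intro!: cos_monotone_0_pi_le)
  qed simp
  moreover have "0 \<le> 2 / pi * x" "2 / pi * x \<le> 1"
    using assms pi_gt_zero by (auto simp: field_simps)
  moreover have "(1 - 2 / pi * x) *\<^sub>R 0 + (2 / pi * x) *\<^sub>R (pi / 2) = x"
    by simp
  ultimately show ?thesis
    using convex_onD[of "{0..pi/2}" "\<lambda>x. - sin x" "2 / pi * x" 0 "pi / 2"] by auto
qed

lemma norm_cis_diff: "cmod (cis a - cis b) = 2 * \<bar>sin ((a - b) / 2)\<bar>"
proof -
  have "(cmod (cis a - cis b))\<^sup>2 = (cos a - cos b)\<^sup>2 + (sin a - sin b)\<^sup>2"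
    by (simp add: cmod_power2)
  also have "\<dots> = 2 - 2 * cos (a - b)"
    by (simp add: power2_eq_square cos_diff algebra_simps)
  also have "\<dots> = (2 * \<bar>sin ((a - b) / 2)\<bar>)\<^sup>2"
  proof -
    have "2 * ((a - b) / 2) = a - b"
      by simp
    then have "cos (a - b) = 1 - 2 * sin ((a - b) / 2) ^ 2"
      by (metis cos_double_sin)
    then show ?thesis
      by (simp add: power_mult_distrib)
  qed
  finally show ?thesis
    by (rule power2_eq_imp_eq) auto
qed

lemma norm_cis_diff_ge:
  assumes "\<bar>a - b\<bar> \<le> pi"
  shows "2 / pi * \<bar>a - b\<bar> \<le> cmod (cis a - cis b)"
proof -
  have "\<bar>sin y\<bar> = sin \<bar>y\<bar>" if "\<bar>y\<bar> \<le> pi" for y :: real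
    using that sin_ge_zero[of y] sin_ge_zero[of "- y"] by (cases "0 \<le> y") auto
  then have "\<bar>sin ((a - b) / 2)\<bar> = sin (\<bar>a - b\<bar> / 2)"
    using assms by simp
  moreover have "2 / pi * (\<bar>a - b\<bar> / 2) \<le> sin (\<bar>a - b\<bar> / 2)"
    using assms by (intro sin_ge_linear) auto
  ultimately show ?thesis
    by (simp add: norm_cis_diff)
qed

lemma Max_diff_ge_card:
  fixes T :: "real set"
  assumes "finite T" "T \<noteq> {}" "\<forall>t\<in>T. d \<le> t - x"
    and "\<forall>s\<in>T. \<forall>t\<in>T. s \<noteq> t \<longrightarrow> d \<le> \<bar>s - t\<bar>"
  shows "d * card T \<le> Max T - x"
  using assms
proof (induction T rule: finite_ranking_induct[where f = id])
  case (insert t S)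
  show ?case
  proof (cases "S = {} \<or> t \<in> S")
    case True
    then consider "S = {}" | "t \<in> S" "S \<noteq> {}"
      by blast
    then show ?thesis
      using insert by cases (simp_all add: insert_absorb)
  next
    case False
    then have "Max (insert t S) = t" "Max S \<in> S"
      using insert by (auto intro: Max_eqI)
    moreover have "d \<le> t - Max S"
      using False insert.hyps(2) insert.prems(3) \<open>Max S \<in> S\<close> by force
    ultimately show ?thesis
      using False insert by (auto simp: algebra_simps)
  qed
qed simp

lemma prod_diff_ge_fact:
  fixes T :: "real set"
  assumes "finite T" "0 \<le> d" "\<forall>t\<in>T. d \<le> t - x"
    and "\<forall>s\<in>T. \<forall>t\<in>T. s \<noteq> t \<longrightarrow> d \<le> \<bar>s - t\<bar>"
  shows "d ^ card T * fact (card T) \<le> (\<Prod>t\<in>T. t - x)"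
  using assms
proof (induction T rule: finite_ranking_induct[where f = id])
  case (insert t S)
  show ?case
  proof (cases "t \<in> S")
    case True
    with insert show ?thesis
      by (simp add: insert_absorb)
  next
    case False
    have "Max (insert t S) = t"
      using insert by (auto intro: Max_eqI)
    then have t_x: "d * (card S + 1) \<le> t - x"
      using Max_diff_ge_card[of "insert t S" d x] insert False by simp
    moreover have "0 \<le> d * (card S + 1)" "0 \<le> d ^ card S * fact (card S)"
      using insert.prems(1) by simp_all
    moreover have "d ^ card S * fact (card S) \<le> (\<Prod>s\<in>S. s - x)"
      using insert by simp
    ultimately have "d * (card S + 1) * (d ^ card S * fact (card S)) \<le> (t - x) * (\<Prod>s\<in>S. s - x)"
      by (intro mult_mono) auto
    then show ?thesis
      using insert False by (simp add: algebra_simps)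
  qed
qed simp

lemma prod_abs_diff_ge_fact:
  fixes T :: "real set"
  assumes "finite T" "0 < d" "\<forall>t\<in>T. d \<le> \<bar>t - x\<bar>"
    and "\<forall>s\<in>T. \<forall>t\<in>T. s \<noteq> t \<longrightarrow> d \<le> \<bar>s - t\<bar>"
  shows "d ^ card T * (fact (card {t\<in>T. t < x}) * fact (card {t\<in>T. x < t}))
    \<le> (\<Prod>t\<in>T. \<bar>t - x\<bar>)"
proof -
  define L where "L = {t\<in>T. t < x}"
  define U where "U = {t\<in>T. x < t}"
  have "T = L \<union> U" "L \<inter> U = {}" "finite L" "finite U"
    using assms by (auto simp: L_def U_def)
  then have card_T: "card T = card L + card U" and
    prod_T: "(\<Prod>t\<in>T. \<bar>t - x\<bar>) = (\<Prod>t\<in>L. \<bar>t - x\<bar>) * (\<Prod>t\<in>U. \<bar>t - x\<bar>)"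
    by (simp_all add: card_Un_disjoint prod.union_disjoint)
  have "d ^ card (uminus ` L) * fact (card (uminus ` L)) \<le> (\<Prod>t\<in>uminus ` L. t - - x)"
    using assms \<open>finite L\<close> by (intro prod_diff_ge_fact) (auto simp: L_def)
  then have prod_L: "d ^ card L * fact (card L) \<le> (\<Prod>t\<in>L. \<bar>t - x\<bar>)"
    by (simp add: card_image prod.reindex L_def)
  have "d ^ card U * fact (card U) \<le> (\<Prod>t\<in>U. t - x)"
    using assms \<open>finite U\<close> by (intro prod_diff_ge_fact) (auto simp: U_def)
  then have prod_U: "d ^ card U * fact (card U) \<le> (\<Prod>t\<in>U. \<bar>t - x\<bar>)"
    by (simp add: U_def)
  have "d ^ card T * (fact (card L) * fact (card U))
      = (d ^ card L * fact (card L)) * (d ^ card U * fact (card U))"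
    by (simp add: card_T power_add algebra_simps)
  also have "\<dots> \<le> (\<Prod>t\<in>L. \<bar>t - x\<bar>) * (\<Prod>t\<in>U. \<bar>t - x\<bar>)"
    using prod_L prod_U assms(2) by (intro mult_mono) (auto simp: prod_nonneg)
  finally show ?thesis
    by (simp add: prod_T L_def U_def)
qed

lemma fact_mult_fact_ge_central:
  assumes "a + b = n"
  shows "fact (n div 2) * fact (n - n div 2) \<le> (fact a * fact b :: nat)"
proof -
  have central: "fact (n div 2) * fact (n - n div 2) * (n choose (n div 2)) = fact n"
    by (rule binomial_fact_lemma) simp
  have "fact (n div 2) * fact (n - n div 2) * (n choose a)
      \<le> fact (n div 2) * fact (n - n div 2) * (n choose (n div 2))"
    by (intro mult_le_mono2 binomial_maximum)
  also have "\<dots> = fact a * fact b * (n choose a)"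
    using binomial_fact_lemma[of a n] assms central by auto
  finally show ?thesis
    using assms by simp
qed

lemma zeta_pos: "0 < zeta k"
  by (simp add: zeta_def)

lemma zeta_le_fact_mult_fact:
  assumes "a + b = k - 1"
  shows "zeta k \<le> fact a * fact b"
proof -
  have "zeta k = fact ((k - 1) div 2) * fact ((k - 1) - (k - 1) div 2)"
  proof (cases "odd k")
    case True
    then obtain m where "k = 2 * m + 1"
      by (rule oddE)
    then show ?thesis
      by (simp add: zeta_def power2_eq_square)
  next
    case False
    then obtain m where "k = 2 * m"
      by blast
    then show ?thesis
      by (cases m) (simp_all add: zeta_def)
  qed
  also have "\<dots> \<le> fact a * fact b"
    using of_nat_mono[OF fact_mult_fact_ge_central[OF assms], where 'a = real] by simp
  finally show ?thesis .
qed

lemma prod_norm_cis_diff_ge: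
  fixes \<theta> :: "nat \<Rightarrow> real"
  assumes range: "\<forall>p<k. \<theta> p \<in> {-pi/2..pi/2}" and "j < k" "0 < d"
    and sep: "\<forall>p<k. \<forall>q<k. p \<noteq> q \<longrightarrow> d \<le> \<bar>\<theta> p - \<theta> q\<bar>"
  shows "(2 / pi) ^ (k - 1) * (zeta k * d ^ (k - 1))
    \<le> (\<Prod>p\<in>{..<k} - {j}. cmod (cis (\<theta> j) - cis (\<theta> p)))"
proof -
  define S where "S = {..<k} - {j}"
  define T where "T = \<theta> ` S"
  have inj: "inj_on \<theta> S"
    using sep \<open>0 < d\<close> by (force simp: S_def inj_on_def)
  then have card_T: "card T = k - 1"
    using \<open>j < k\<close> by (simp add: T_def S_def card_image)
  have split: "{t\<in>T. t < \<theta> j} \<union> {t\<in>T. \<theta> j < t} = T"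
    using sep \<open>0 < d\<close> \<open>j < k\<close> by (force simp: T_def S_def)
  have "card {t\<in>T. t < \<theta> j} + card {t\<in>T. \<theta> j < t}
      = card ({t\<in>T. t < \<theta> j} \<union> {t\<in>T. \<theta> j < t})"
    by (rule card_Un_disjoint[symmetric]) (auto simp: T_def S_def)
  then have "card {t\<in>T. t < \<theta> j} + card {t\<in>T. \<theta> j < t} = k - 1"
    by (simp only: split card_T)
  then have "zeta k * d ^ (k - 1)
      \<le> d ^ card T * (fact (card {t\<in>T. t < \<theta> j}) * fact (card {t\<in>T. \<theta> j < t}))"
    using zeta_le_fact_mult_fact \<open>0 < d\<close> card_T by (simp add: mult.commute)
  also have "\<dots> \<le> (\<Prod>t\<in>T. \<bar>t - \<theta> j\<bar>)"
    using sep \<open>0 < d\<close> \<open>j < k\<close> by (intro prod_abs_diff_ge_fact) (auto simp: T_def S_def)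
  also have "\<dots> = (\<Prod>p\<in>S. \<bar>\<theta> j - \<theta> p\<bar>)"
    unfolding T_def by (simp add: prod.reindex[OF inj] abs_minus_commute)
  finally have "(2 / pi) ^ (k - 1) * (zeta k * d ^ (k - 1))
      \<le> (\<Prod>p\<in>S. 2 / pi) * (\<Prod>p\<in>S. \<bar>\<theta> j - \<theta> p\<bar>)"
    using \<open>j < k\<close> by (simp add: S_def)
  also have "\<dots> = (\<Prod>p\<in>S. 2 / pi * \<bar>\<theta> j - \<theta> p\<bar>)"
    by (rule prod.distrib[symmetric])
  also have "\<dots> \<le> (\<Prod>p\<in>S. cmod (cis (\<theta> j) - cis (\<theta> p)))"
  proof (rule prod_mono)
    fix p assume "p \<in> S"
    then have "p < k"
      by (simp add: S_def)
    then have "\<bar>\<theta> j - \<theta> p\<bar> \<le> pi"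
      using range[rule_format, of p] range[rule_format, of j] \<open>j < k\<close> by auto
    then show "0 \<le> 2 / pi * \<bar>\<theta> j - \<theta> p\<bar> \<and> 2 / pi * \<bar>\<theta> j - \<theta> p\<bar> \<le> cmod (cis (\<theta> j) - cis (\<theta> p))"
      using norm_cis_diff_ge by simp
  qed
  finally show ?thesis
    by (simp add: S_def)
qed

lemma norm_coeff_prod_linear_le:
  fixes ws :: "'a::real_normed_field list"
  assumes "\<forall>w\<in>set ws. norm w \<le> 1"
  shows "norm (coeff (\<Prod>w\<leftarrow>ws. [:- w, 1:]) t) \<le> real (length ws choose t)"
  using assms
proof (induction ws arbitrary: t)
  case Nil
  then show ?case
    by (simp add: coeff_1)
next
  case (Cons w ws)
  let ?P = "\<Prod>w\<leftarrow>ws. [:- w, 1:]"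
  show ?case
  proof (cases t)
    case 0
    have "norm (coeff ([:- w, 1:] * ?P) 0) = norm w * norm (coeff ?P 0)"
      by (simp add: norm_mult)
    also have "\<dots> \<le> 1 * 1"
      using Cons Cons.IH[of 0] by (intro mult_mono) auto
    finally show ?thesis
      using 0 by simp
  next
    case (Suc m)
    have "norm (coeff ([:- w, 1:] * ?P) (Suc m)) = norm (- w * coeff ?P (Suc m) + coeff ?P m)"
      by simp
    also have "\<dots> \<le> norm w * norm (coeff ?P (Suc m)) + norm (coeff ?P m)"
      using norm_triangle_ineq[of "- w * coeff ?P (Suc m)" "coeff ?P m"] by (simp add: norm_mult)
    also have "\<dots> \<le> 1 * real (length ws choose Suc m) + real (length ws choose m)"
      using Cons Cons.IH[of "Suc m"] Cons.IH[of m] by (intro add_mono mult_mono) auto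
    finally show ?thesis
      using Suc by simp
  qed
qed

lemma sum_norm_coeff_prod_linear_le:
  fixes ws :: "'a::real_normed_field list"
  assumes "\<forall>w\<in>set ws. norm w \<le> 1"
  shows "(\<Sum>t\<le>length ws. norm (coeff (\<Prod>w\<leftarrow>ws. [:- w, 1:]) t)) \<le> 2 ^ length ws"
proof -
  have "(\<Sum>t\<le>length ws. norm (coeff (\<Prod>w\<leftarrow>ws. [:- w, 1:]) t))
      \<le> (\<Sum>t\<le>length ws. real (length ws choose t))"
    by (intro sum_mono norm_coeff_prod_linear_le assms)
  also have "\<dots> = 2 ^ length ws"
    by (simp flip: of_nat_sum add: choose_row_sum)
  finally show ?thesis .
qed

lemma degree_prod_linear_le: "degree (\<Prod>w\<leftarrow>ws. [:- w, 1:]) \<le> length ws"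
  using degree_prod_list_le[of "map (\<lambda>w. [:- w, 1:]) ws"] by (simp add: comp_def sum_list_triv)

lemma sum_coeff_vandermonde_apply:
  assumes "degree P < N"
  shows "(\<Sum>t<N. coeff P t * vandermonde_apply s k z c t) = (\<Sum>i<k. c i * poly P (z i))"
proof -
  have "poly P x = (\<Sum>t<N. coeff P t * x ^ t)" for x
    unfolding poly_altdef using assms
    by (intro sum.mono_neutral_left) (auto simp: coeff_eq_0)
  then show ?thesis
    by (simp add: vandermonde_apply_def phi_def sum_distrib_left sum_distrib_right mult_ac
        sum.swap[of _ "{..<N}"])
qed

lemma norm_le_norm2: "t < n \<Longrightarrow> cmod (v t) \<le> norm2 n v"
  unfolding norm2_def by (rule real_le_rsqrt) (auto intro: member_le_sum)

lemma norm_sum_mult_le_norm2: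
  "cmod (\<Sum>t<n. c t * v t) \<le> (\<Sum>t<n. cmod (c t)) * norm2 n v"
proof -
  have "cmod (\<Sum>t<n. c t * v t) \<le> (\<Sum>t<n. cmod (c t) * cmod (v t))"
    using norm_sum[of "\<lambda>t. c t * v t" "{..<n}"] by (simp add: norm_mult)
  also have "\<dots> \<le> (\<Sum>t<n. cmod (c t) * norm2 n v)"
    by (intro sum_mono mult_left_mono norm_le_norm2) auto
  finally show ?thesis
    by (simp add: sum_distrib_right)
qed

lemma prod_list_map_filter_neq:
  "(\<Prod>p\<leftarrow>filter (\<lambda>p. p \<noteq> j) [0..<k]. f p) = (\<Prod>p\<in>{..<k} - {j}. f p)"
  by (subst prod.distinct_set_conv_list[symmetric]) (auto intro: prod.cong)

lemma sum_coeff_residual_annihilating: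
  fixes z zh a ah :: "nat \<Rightarrow> complex"
  assumes "degree P < N" "j < k"
    and "\<forall>l<k. poly P (zh l) = 0" "\<forall>p<k. p \<noteq> j \<longrightarrow> poly P (z p) = 0"
  shows "(\<Sum>t<N. coeff P t * (vandermonde_apply s k zh ah t - vandermonde_apply s k z a t))
    = - (a j * poly P (z j))"
proof -
  have "(\<Sum>t<N. coeff P t * (vandermonde_apply s k zh ah t - vandermonde_apply s k z a t))
      = (\<Sum>l<k. ah l * poly P (zh l)) - (\<Sum>p<k. a p * poly P (z p))"
    using assms(1) by (simp add: right_diff_distrib sum_subtractf sum_coeff_vandermonde_apply)
  also have "\<dots> = - (a j * poly P (z j))"
    using assms(2-4) by (simp add: sum.remove[of "{..<k}" j "\<lambda>p. a p * poly P (z p)"])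
  finally show ?thesis .
qed

lemma norm_mult_eta_le_residual:
  fixes z zh a ah :: "nat \<Rightarrow> complex"
  assumes "\<forall>l<k. cmod (zh l) \<le> 1" "\<forall>p<k. cmod (z p) \<le> 1" "j < k"
  shows "cmod (a j) * (eta k k z zh j * (\<Prod>p\<in>{..<k} - {j}. cmod (z j - z p)))
    \<le> 2 ^ (2*k - 1) * norm2 (2*k) (\<lambda>t. vandermonde_apply (2*k - 1) k zh ah t
                                        - vandermonde_apply (2*k - 1) k z a t)"
    (is "_ \<le> _ * norm2 (2*k) ?r")
proof -
  define ws where "ws = map zh [0..<k] @ map z (filter (\<lambda>p. p \<noteq> j) [0..<k])"
  define P where "P = (\<Prod>w\<leftarrow>ws. [:- w, 1:])"
  have "length (filter (\<lambda>p. p \<noteq> j) [0..<k]) = card ({..<k} - {j})"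
    by (subst distinct_card[symmetric]) (auto intro: arg_cong[where f = card])
  then have len: "length ws = 2*k - 1"
    using \<open>j < k\<close> by (simp add: ws_def)
  have poly_P: "poly P x = (\<Prod>l<k. x - zh l) * (\<Prod>p\<in>{..<k} - {j}. x - z p)" for x
    by (simp add: P_def ws_def poly_prod_list poly_prod comp_def prod_list_map_filter_neq
        atLeast0LessThan flip: prod.distinct_set_conv_list)
  have "degree P < 2*k"
    using degree_prod_linear_le[of ws] len \<open>j < k\<close> by (simp add: P_def)
  then have "(\<Sum>t<2*k. coeff P t * ?r t) = - (a j * poly P (z j))"
    using \<open>j < k\<close> by (intro sum_coeff_residual_annihilating) (auto simp: poly_P prod_zero_iff)
  then have "cmod (a j * poly P (z j)) \<le> (\<Sum>t<2*k. cmod (coeff P t)) * norm2 (2*k) ?r"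
    by (metis norm_minus_cancel norm_sum_mult_le_norm2)
  also have "\<dots> \<le> 2 ^ (2*k - 1) * norm2 (2*k) ?r"
  proof (rule mult_right_mono)
    have "{..<2*k} = {..length ws}"
      using len \<open>j < k\<close> by auto
    moreover have "\<forall>w\<in>set ws. cmod w \<le> 1"
      using assms by (auto simp: ws_def)
    ultimately show "(\<Sum>t<2*k. cmod (coeff P t)) \<le> 2 ^ (2*k - 1)"
      using sum_norm_coeff_prod_linear_le[of ws] len by (simp add: P_def)
  qed (simp add: norm2_def sum_nonneg)
  finally show ?thesis
    by (simp add: poly_P eta_def norm_mult prod_norm)
qed

lemma eta_cis_le_residual:
  fixes \<theta> \<theta>h :: "nat \<Rightarrow> real" and a ah :: "nat \<Rightarrow> complex"
  assumes "\<forall>p<k. \<theta> p \<in> {-pi/2..pi/2}" "j < k" "0 < d"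
    and "\<forall>p<k. \<forall>q<k. p \<noteq> q \<longrightarrow> d \<le> \<bar>\<theta> p - \<theta> q\<bar>"
    and "m \<le> cmod (a j)"
  shows "m * ((2 / pi) ^ (k - 1) * (zeta k * d ^ (k - 1)))
      * eta k k (\<lambda>j. cis (\<theta> j)) (\<lambda>j. cis (\<theta>h j)) j
    \<le> 2 ^ (2*k - 1) * norm2 (2*k) (\<lambda>t. vandermonde_apply (2*k - 1) k (\<lambda>j. cis (\<theta>h j)) ah t
                                        - vandermonde_apply (2*k - 1) k (\<lambda>j. cis (\<theta> j)) a t)"
proof -
  let ?E = "eta k k (\<lambda>j. cis (\<theta> j)) (\<lambda>j. cis (\<theta>h j)) j"
  have "0 \<le> ?E"
    by (simp add: eta_def prod_nonneg)
  have "m * ((2 / pi) ^ (k - 1) * (zeta k * d ^ (k - 1))) * ?E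
      \<le> cmod (a j) * (\<Prod>p\<in>{..<k} - {j}. cmod (cis (\<theta> j) - cis (\<theta> p))) * ?E"
    using assms prod_norm_cis_diff_ge[OF assms(1-4)] \<open>0 \<le> ?E\<close> zeta_pos[of k]
    by (intro mult_right_mono mult_mono) auto
  also have "\<dots> \<le> 2 ^ (2*k - 1) * norm2 (2*k) (\<lambda>t. vandermonde_apply (2*k - 1) k (\<lambda>j. cis (\<theta>h j)) ah t
                                        - vandermonde_apply (2*k - 1) k (\<lambda>j. cis (\<theta> j)) a t)"
    using norm_mult_eta_le_residual[of k "\<lambda>j. cis (\<theta>h j)" "\<lambda>j. cis (\<theta> j)" j a ah] \<open>j < k\<close>
    by (simp add: mult_ac)
  finally show ?thesis .
qed

lemma Min_abs_diff_pos:
  fixes \<theta> :: "nat \<Rightarrow> real"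
  assumes "2 \<le> k" "\<forall>p<k. \<forall>q<k. p \<noteq> q \<longrightarrow> \<theta> p \<noteq> \<theta> q"
  shows "0 < Min {\<bar>\<theta> p - \<theta> q\<bar> | p q. p < k \<and> q < k \<and> p \<noteq> q}"
    and "\<forall>p<k. \<forall>q<k. p \<noteq> q \<longrightarrow> Min {\<bar>\<theta> p - \<theta> q\<bar> | p q. p < k \<and> q < k \<and> p \<noteq> q} \<le> \<bar>\<theta> p - \<theta> q\<bar>"
proof -
  let ?D = "{\<bar>\<theta> p - \<theta> q\<bar> | p q. p < k \<and> q < k \<and> p \<noteq> q}"
  have "?D \<subseteq> (\<lambda>(p, q). \<bar>\<theta> p - \<theta> q\<bar>) ` ({..<k} \<times> {..<k})"
    by auto
  then have "finite ?D"
    by (rule finite_subset) auto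
  moreover have "\<bar>\<theta> 0 - \<theta> 1\<bar> \<in> ?D"
    using assms(1) by force
  ultimately show "0 < Min ?D"
    using assms(2) by (subst Min_gr_iff) auto
  show "\<forall>p<k. \<forall>q<k. p \<noteq> q \<longrightarrow> Min ?D \<le> \<bar>\<theta> p - \<theta> q\<bar>"
    using \<open>finite ?D\<close> by (auto intro: Min_le)
qed

lemma power_two_pi_cancel:
  fixes c m \<sigma> :: real
  assumes "1 \<le> k" "0 < c" "0 < m"
  shows "m * ((2 / pi) ^ (k - 1) * c) * (2 ^ k * pi ^ (k - 1) / c * (\<sigma> / m)) = 2 ^ (2*k - 1) * \<sigma>"
proof -
  obtain n where k: "k = Suc n"
    using assms(1) by (cases k) auto
  have "(2 / pi) ^ n * pi ^ n = (2::real) ^ n"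
    by (simp add: power_divide)
  moreover have "2*k - 1 = k + n"
    using k by simp
  ultimately show ?thesis
    using assms(2,3) unfolding k diff_Suc_1 by (simp only: power_add) (simp add: field_simps)
qed

lemma norm_inf_less: "0 < n \<Longrightarrow> \<forall>j<n. \<bar>v j\<bar> < B \<Longrightarrow> norm_inf n v < B"
  unfolding norm_inf_def by (subst Max_less_iff) auto

theorem theorem3p3:
  fixes k :: nat and \<theta> \<theta>h :: "nat \<Rightarrow> real" and a ah :: "nat \<Rightarrow> complex"
    and m_min \<sigma> :: real
  assumes hk: "k \<ge> 2"
    and h\<theta>: "\<forall>j<k. \<theta> j \<in> {-pi/2..pi/2}"
    and h\<theta>dist: "\<forall>p<k. \<forall>j<k. p \<noteq> j \<longrightarrow> \<theta> p \<noteq> \<theta> j"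
    and hm: "m_min > 0"
    and ha: "\<forall>j<k. cmod (a j) \<ge> m_min"
    and h\<theta>h: "\<forall>j<k. \<theta>h j \<in> {-pi/2..pi/2}"
    and h\<theta>hdist: "\<forall>p<k. \<forall>j<k. p \<noteq> j \<longrightarrow> \<theta>h p \<noteq> \<theta>h j"
    and hres: "norm2 (2*k) (\<lambda>t. vandermonde_apply (2*k-1) k (\<lambda>j. cis (\<theta>h j)) ah t
                               - vandermonde_apply (2*k-1) k (\<lambda>j. cis (\<theta> j)) a t) < \<sigma>"
  shows "let \<theta>_min = Min {\<bar>\<theta> p - \<theta> j\<bar> | p j. p < k \<and> j < k \<and> p \<noteq> j} in
         norm_inf k (eta k k (\<lambda>j. cis (\<theta> j)) (\<lambda>j. cis (\<theta>h j)))
           < 2^k * pi^(k-1) / (zeta k * \<theta>_min^(k-1)) * (\<sigma> / m_min)"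
proof -
  define d where "d = Min {\<bar>\<theta> p - \<theta> j\<bar> | p j. p < k \<and> j < k \<and> p \<noteq> j}"
  define K where "K = (2 / pi) ^ (k - 1) * (zeta k * d ^ (k - 1))"
  define B where "B = 2^k * pi^(k-1) / (zeta k * d^(k-1)) * (\<sigma> / m_min)"
  have "0 < d" and sep: "\<forall>p<k. \<forall>q<k. p \<noteq> q \<longrightarrow> d \<le> \<bar>\<theta> p - \<theta> q\<bar>"
    using Min_abs_diff_pos[OF hk h\<theta>dist] by (simp_all add: d_def)
  have const: "2 ^ (2*k - 1) * \<sigma> = m_min * K * B"
    using hk hm \<open>0 < d\<close> zeta_pos[of k] unfolding K_def B_def
    by (intro power_two_pi_cancel[symmetric]) simp_all
  have "eta k k (\<lambda>j. cis (\<theta> j)) (\<lambda>j. cis (\<theta>h j)) j < B" if "j < k" for j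
  proof -
    have "m_min * K * eta k k (\<lambda>j. cis (\<theta> j)) (\<lambda>j. cis (\<theta>h j)) j < 2 ^ (2*k - 1) * \<sigma>"
      using eta_cis_le_residual[OF h\<theta> that \<open>0 < d\<close> sep, of m_min a \<theta>h ah] ha that hres
      unfolding K_def by (smt (verit) mult_strict_left_mono zero_less_power zero_less_numeral)
    moreover have "0 < m_min * K"
      using hm \<open>0 < d\<close> zeta_pos[of k] by (simp add: K_def)
    ultimately show ?thesis
      unfolding const using mult_less_cancel_left_pos by blast
  qed
  then have "norm_inf k (eta k k (\<lambda>j. cis (\<theta> j)) (\<lambda>j. cis (\<theta>h j))) < B"
    using hk by (intro norm_inf_less) (auto simp: eta_def prod_nonneg)
  then show ?thesis
    unfolding Let_def d_def[symmetric] B_def[symmetric] .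
qed

end
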